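(* Fix $I\in\mathbb{N}$. For $\rho \in [0,1]^I$ satisfying $\sum_{i=1}^I 2i \rho_i <1$, the $I\times I$ matrix $M=M(\rho)$ with entries $M_{ii}(\rho)=1-\sum_{j \neq i} 2(i \wedge j) \rho_j$ and $M_{ij}(\rho)=2(i\wedge j)\rho_j$ for $i\neq j$ is invertible. *)

theory Defs
  imports "Jordan_Normal_Form.Matrix"
begin

text \<open>Indices are 0-based in Isabelle: the
  paper's index i in {1..I} corresponds to the Isabelle index i-1, so the paper's
  entry rho_i is rho (i-1) and i \<wedge> j = min i j.\<close>

definition M_mat :: "nat \<Rightarrow> (nat \<Rightarrow> real) \<Rightarrow> real mat" where
  "M_mat I \<rho> = mat I I (\<lambda>(a, b).
     if a = b then 1 - (\<Sum>j\<in>{0..<I} - {a}. 2 * real (min (a+1) (j+1)) * \<rho> j)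
     else 2 * real (min (a+1) (b+1)) * \<rho> b)"

end

theory Submission
  imports Defs "Jordan_Normal_Form.Determinant"
begin

text \<open>Write \<open>M = D + K R\<close> with \<open>D\<close> diagonal with entries
  \<open>d\<^sub>i = 1 - \<Sum>\<^sub>j 2 min(i,j) \<rho>\<^sub>j\<close> (positive by the hypothesis), \<open>R = diag \<rho>\<close> and
  \<open>K = (2 min(i,j))\<close>. The kernel \<open>K\<close> is positive semidefinite, because
  \<open>min(i,j) = \<Sum>\<^sub>k [k \<le> i] [k \<le> j]\<close> makes it a sum of rank-one squares. If \<open>M x = 0\<close>,
  pairing with \<open>R x\<close> gives \<open>\<Sum>\<^sub>i \<rho>\<^sub>i d\<^sub>i x\<^sub>i\<^sup>2 + (R x)\<^sup>T K (R x) = 0\<close>, a sum of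
  nonnegative terms; hence \<open>R x = 0\<close>, so \<open>D x = 0\<close> and \<open>x = 0\<close>.\<close>

lemma invertible_mat_if_mult_vec_injective:
  fixes A :: "'a::field mat"
  assumes A: "A \<in> carrier_mat n n"
    and kernel: "\<And>v. v \<in> carrier_vec n \<Longrightarrow> A *\<^sub>v v = 0\<^sub>v n \<Longrightarrow> v = 0\<^sub>v n"
  shows "invertible_mat A"
proof -
  have "det A \<noteq> 0"
    using det_0_iff_vec_prod_zero[OF A] kernel by auto
  from det_non_zero_imp_unit[OF A this, of "()"]
  obtain B where "B \<in> carrier_mat n n" "B * A = 1\<^sub>m n" "A * B = 1\<^sub>m n"
    by (auto simp: Units_def ring_mat_def)
  with A show ?thesis
    unfolding invertible_mat_def inverts_mat_def by auto
qed

lemma diagonal_plus_psd_scaled_system_has_only_trivial_solution: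
  fixes d r x :: "nat \<Rightarrow> real" and K :: "nat \<Rightarrow> nat \<Rightarrow> real"
  assumes d_pos: "\<And>i. i < n \<Longrightarrow> d i > 0"
    and r_nonneg: "\<And>i. i < n \<Longrightarrow> r i \<ge> 0"
    and K_psd: "\<And>w. (\<Sum>i<n. \<Sum>j<n. K i j * w i * w j) \<ge> 0"
    and system: "\<And>i. i < n \<Longrightarrow> d i * x i + (\<Sum>j<n. K i j * r j * x j) = 0"
    and "i < n"
  shows "x i = 0"
proof -
  define w where "w j = r j * x j" for j
  have "0 = (\<Sum>i<n. w i * (d i * x i + (\<Sum>j<n. K i j * r j * x j)))"
    using system by simp
  also have "\<dots> = (\<Sum>i<n. r i * d i * (x i)\<^sup>2) + (\<Sum>i<n. \<Sum>j<n. K i j * w i * w j)"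
    by (simp add: w_def sum.distrib sum_distrib_left power2_eq_square algebra_simps)
  finally have energy: "(\<Sum>i<n. r i * d i * (x i)\<^sup>2) + (\<Sum>i<n. \<Sum>j<n. K i j * w i * w j) = 0" ..
  have diagonal_nonneg: "0 \<le> r i * d i * (x i)\<^sup>2" if "i < n" for i
    using r_nonneg[OF that] d_pos[OF that] by simp
  then have "(\<Sum>i<n. r i * d i * (x i)\<^sup>2) = 0"
    using energy K_psd[of w] sum_nonneg[of "{..<n}" "\<lambda>i. r i * d i * (x i)\<^sup>2"] by force
  then have diagonal_zero: "r j * d j * (x j)\<^sup>2 = 0" if "j < n" for j
    using that diagonal_nonneg sum_nonneg_eq_0_iff[of "{..<n}" "\<lambda>i. r i * d i * (x i)\<^sup>2"]
    by blast
  have w_zero: "w j = 0" if "j < n" for j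
    using diagonal_zero[OF that] d_pos[OF that] by (simp add: w_def)
  have "(\<Sum>j<n. K i j * r j * x j) = (\<Sum>j<n. K i j * w j)"
    by (simp add: w_def mult.assoc)
  also have "\<dots> = 0"
    using w_zero by simp
  finally have "(\<Sum>j<n. K i j * r j * x j) = 0" .
  then show ?thesis
    using system[OF \<open>i < n\<close>] d_pos[OF \<open>i < n\<close>] by simp
qed

lemma real_min_add_one_eq_sum_of_bool:
  assumes "i < n" "j < n"
  shows "real (min (i+1) (j+1)) = (\<Sum>k<n. of_bool (k \<le> i) * of_bool (k \<le> j))"
proof -
  have "(\<Sum>k<n. of_bool (k \<le> i) * of_bool (k \<le> j)) = (\<Sum>k\<in>{..<n}. of_bool (k \<le> min i j) :: real)"
    by (intro sum.cong) auto
  also have "\<dots> = real (card ({..<n} \<inter> {..min i j}))"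
    by (simp add: Int_def)
  also have "{..<n} \<inter> {..min i j} = {..min i j}"
    using assms by auto
  finally show ?thesis by simp
qed

lemma min_quadratic_form_eq_sum_squares:
  fixes w :: "nat \<Rightarrow> real"
  shows "(\<Sum>i<n. \<Sum>j<n. real (min (i+1) (j+1)) * w i * w j)
       = (\<Sum>k<n. (\<Sum>i<n. of_bool (k \<le> i) * w i)\<^sup>2)"
proof -
  have summand: "real (min (i+1) (j+1)) * w i * w j
      = (\<Sum>k<n. (of_bool (k \<le> i) * w i) * (of_bool (k \<le> j) * w j))"
    if "i < n" "j < n" for i j
  proof -
    have "real (min (i+1) (j+1)) * w i * w j
        = (\<Sum>k<n. of_bool (k \<le> i) * of_bool (k \<le> j)) * w i * w j"
      by (simp only: real_min_add_one_eq_sum_of_bool[OF that])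
    also have "\<dots> = (\<Sum>k<n. (of_bool (k \<le> i) * w i) * (of_bool (k \<le> j) * w j))"
      by (simp only: sum_distrib_right) (rule sum.cong[OF refl], simp only: mult_ac)
    finally show ?thesis .
  qed
  have "(\<Sum>i<n. \<Sum>j<n. real (min (i+1) (j+1)) * w i * w j)
      = (\<Sum>i<n. \<Sum>j<n. \<Sum>k<n. (of_bool (k \<le> i) * w i) * (of_bool (k \<le> j) * w j))"
    by (intro sum.cong refl summand) auto
  also have "\<dots> = (\<Sum>i<n. \<Sum>k<n. \<Sum>j<n. (of_bool (k \<le> i) * w i) * (of_bool (k \<le> j) * w j))"
    by (rule sum.cong[OF refl], rule sum.swap)
  also have "\<dots> = (\<Sum>k<n. \<Sum>i<n. \<Sum>j<n. (of_bool (k \<le> i) * w i) * (of_bool (k \<le> j) * w j))"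
    by (rule sum.swap)
  also have "\<dots> = (\<Sum>k<n. (\<Sum>i<n. of_bool (k \<le> i) * w i)\<^sup>2)"
    by (simp only: power2_eq_square sum_product)
  finally show ?thesis .
qed

lemma min_quadratic_form_nonneg:
  fixes c :: real and w :: "nat \<Rightarrow> real"
  assumes "c \<ge> 0"
  shows "(\<Sum>i<n. \<Sum>j<n. c * real (min (i+1) (j+1)) * w i * w j) \<ge> 0"
proof -
  have "(\<Sum>i<n. \<Sum>j<n. c * real (min (i+1) (j+1)) * w i * w j)
      = c * (\<Sum>k<n. (\<Sum>i<n. of_bool (k \<le> i) * w i)\<^sup>2)"
    by (simp only: min_quadratic_form_eq_sum_squares[symmetric] sum_distrib_left mult.assoc)
  also have "\<dots> \<ge> 0"
    using assms by (intro mult_nonneg_nonneg sum_nonneg zero_le_power2)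
  finally show ?thesis .
qed

lemma min_weighted_sum_less_one:
  fixes \<rho> :: "nat \<Rightarrow> real"
  assumes "\<And>j. j < I \<Longrightarrow> 0 \<le> \<rho> j" and "(\<Sum>j<I. 2 * real (j+1) * \<rho> j) < 1"
  shows "(\<Sum>j<I. 2 * real (min (i+1) (j+1)) * \<rho> j) < 1"
proof -
  have "(\<Sum>j<I. 2 * real (min (i+1) (j+1)) * \<rho> j) \<le> (\<Sum>j<I. 2 * real (j+1) * \<rho> j)"
    using assms(1) by (intro sum_mono mult_right_mono) auto
  with assms(2) show ?thesis
    by simp
qed

lemma M_mat_mult_vec_nth:
  fixes \<rho> :: "nat \<Rightarrow> real"
  assumes "i < I" "v \<in> carrier_vec I"
  shows "(M_mat I \<rho> *\<^sub>v v) $ i =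
    (1 - (\<Sum>j<I. 2 * real (min (i+1) (j+1)) * \<rho> j)) * v $ i
    + (\<Sum>j<I. 2 * real (min (i+1) (j+1)) * \<rho> j * v $ j)"
proof -
  let ?c = "\<lambda>j. 2 * real (min (i+1) (j+1)) * \<rho> j"
  have i: "i \<in> {..<I}"
    using assms by simp
  have diagonal: "M_mat I \<rho> $$ (i,i) = (1 - (\<Sum>j<I. ?c j)) + ?c i"
    using assms by (simp add: M_mat_def atLeast0LessThan sum.remove[OF finite_lessThan i])
  have "(M_mat I \<rho> *\<^sub>v v) $ i = (\<Sum>j<I. M_mat I \<rho> $$ (i,j) * v $ j)"
    using assms by (simp add: M_mat_def scalar_prod_def atLeast0LessThan)
  also have "\<dots> = M_mat I \<rho> $$ (i,i) * v $ i + (\<Sum>j\<in>{..<I}-{i}. ?c j * v $ j)"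
    using assms by (simp add: sum.remove[OF finite_lessThan i] M_mat_def)
  also have "\<dots> = (1 - (\<Sum>j<I. ?c j)) * v $ i + (?c i * v $ i + (\<Sum>j\<in>{..<I}-{i}. ?c j * v $ j))"
    by (simp only: diagonal distrib_right add.assoc)
  also have "\<dots> = (1 - (\<Sum>j<I. ?c j)) * v $ i + (\<Sum>j<I. ?c j * v $ j)"
    by (simp only: sum.remove[OF finite_lessThan i, of "\<lambda>j. ?c j * v $ j"])
  finally show ?thesis .
qed

theorem lemma5p1:
  fixes I :: nat and \<rho> :: "nat \<Rightarrow> real"
  assumes "\<And>i. i < I \<Longrightarrow> 0 \<le> \<rho> i \<and> \<rho> i \<le> 1"
    and "(\<Sum>i<I. 2 * real (i+1) * \<rho> i) < 1"
  shows "invertible_mat (M_mat I \<rho>)"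
proof (rule invertible_mat_if_mult_vec_injective)
  show "M_mat I \<rho> \<in> carrier_mat I I"
    by (simp add: M_mat_def)
  have \<rho>_nonneg: "0 \<le> \<rho> j" if "j < I" for j
    using assms(1)[OF that] by simp
  fix v assume v: "v \<in> carrier_vec I" "M_mat I \<rho> *\<^sub>v v = 0\<^sub>v I"
  have "v $ i = 0" if "i < I" for i
  proof (rule diagonal_plus_psd_scaled_system_has_only_trivial_solution
      [where d = "\<lambda>i. 1 - (\<Sum>j<I. 2 * real (min (i+1) (j+1)) * \<rho> j)"
        and K = "\<lambda>i j. 2 * real (min (i+1) (j+1))" and r = \<rho> and x = "\<lambda>j. v $ j",
        OF _ \<rho>_nonneg min_quadratic_form_nonneg[OF zero_le_numeral] _ that])
    show "0 < 1 - (\<Sum>k<I. 2 * real (min (j+1) (k+1)) * \<rho> k)" for j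
      using min_weighted_sum_less_one[OF \<rho>_nonneg assms(2)] by simp
    show "(1 - (\<Sum>k<I. 2 * real (min (j+1) (k+1)) * \<rho> k)) * v $ j
        + (\<Sum>k<I. 2 * real (min (j+1) (k+1)) * \<rho> k * v $ k) = 0" if "j < I" for j
      using M_mat_mult_vec_nth[OF that v(1), of \<rho>] v(2) that by simp
  qed
  with v(1) show "v = 0\<^sub>v I"
    by (intro eq_vecI) auto
qed

end
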